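(* Let $\Theta\subseteq\mathbb R^d$, suppose Assumptions 1 and 2 hold with constants $L,B>0$, and let $\mu$ be a distribution on $\mathcal Z$ with $z_{1:n}=(z_1,\dots,z_n)$ i.i.d. from $\mu$. Let $\varepsilon>0$, $T\in\{0,\dots,n\}$, let $\Phi_n$ be any set of maps $\mathcal Z^n\to\Theta$, and let $\Phi_{T,\varepsilon}$ be a finite set of maps $\mathcal Z^n\to\Theta$ each depending on at most $T$ samples, such that for every $x_{1:n}\in\mathcal Z^n$ and every $\psi\in\Phi_n$ there is $\phi\in\Phi_{T,\varepsilon}$ with $\|\psi(x_{1:n})-\phi(x_{1:n})\|\le\varepsilon$. Then with probability at least $1-\delta$, for all $\psi\in\Phi_n$, $$\left|\hat F(\psi(z_{1:n}))-F(\psi(z_{1:n}))\right|\le\frac{BT}{n}+B\sqrt{\frac{\log(2|\Phi_{T,\varepsilon}|/\delta)}{2n}}+2L\varepsilon.$$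
   Context: $F(\theta):=\mathbb E_{Z\sim\mu}[f(\theta;Z)]$, $\hat F(\theta):=\frac1n\sum_{i=1}^nf(\theta;z_i)$ for a loss $f:\Theta\times\mathcal Z\to\mathbb R$. Assumption 1 (constant $L$): there is $h_0:\Theta\to\mathbb R$ with $|f(\theta;z)-h_0(\theta)-(f(\theta';z)-h_0(\theta'))|\le L\|\theta-\theta'\|$ for all $\theta,\theta'\in\Theta$, $z$. Assumption 2 (constant $B$): $\sup_zf(\theta;z)-\inf_zf(\theta;z)\le B$ for all $\theta\in\Theta$. A map $\phi:\mathcal Z^n\to\Theta$ "depends on at most $T$ samples" if there is $\mathcal I\subseteq[n]$ with $|\mathcal I|\le T$ such that $\phi(x_1,\dots,x_n)=\phi(x_1',\dots,x_n')$ whenever $x_i=x_i'$ for all $i\in\mathcal I$. *)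

theory Defs
  imports "HOL-Probability.Probability"
begin

definition pop_risk :: "'z measure \<Rightarrow> ('a \<Rightarrow> 'z \<Rightarrow> real) \<Rightarrow> 'a \<Rightarrow> real" where
  "pop_risk \<mu> f \<theta> = (\<integral>z. f \<theta> z \<partial>\<mu>)"

definition emp_risk :: "nat \<Rightarrow> ('a \<Rightarrow> 'z \<Rightarrow> real) \<Rightarrow> (nat \<Rightarrow> 'z) \<Rightarrow> 'a \<Rightarrow> real" where
  "emp_risk n f zs \<theta> = (\<Sum>i<n. f \<theta> (zs i)) / real n"

abbreviation sample_space :: "nat \<Rightarrow> 'z set \<Rightarrow> (nat \<Rightarrow> 'z) set" where
  "sample_space n Z \<equiv> PiE {..<n} (\<lambda>_. Z)"

definition depends_on_at_most :: "nat \<Rightarrow> 'z set \<Rightarrow> nat \<Rightarrow> ((nat \<Rightarrow> 'z) \<Rightarrow> 'a) \<Rightarrow> bool" where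
  "depends_on_at_most n Z T \<phi> \<longleftrightarrow>
     (\<exists>I. I \<subseteq> {..<n} \<and> card I \<le> T \<and>
        (\<forall>x\<in>sample_space n Z. \<forall>x'\<in>sample_space n Z. (\<forall>i\<in>I. x i = x' i) \<longrightarrow> \<phi> x = \<phi> x'))"

definition assumption1 :: "'a::real_normed_vector set \<Rightarrow> 'z set \<Rightarrow> ('a \<Rightarrow> 'z \<Rightarrow> real) \<Rightarrow> real \<Rightarrow> bool" where
  "assumption1 \<Theta> Z f L \<longleftrightarrow> (\<exists>h0 :: 'a \<Rightarrow> real. \<forall>\<theta>\<in>\<Theta>. \<forall>\<theta>'\<in>\<Theta>. \<forall>z\<in>Z.
      \<bar>f \<theta> z - h0 \<theta> - (f \<theta>' z - h0 \<theta>')\<bar> \<le> L * norm (\<theta> - \<theta>'))"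

text \<open>Assumption 2 with constant B: sup_z f(theta;z) - inf_z f(theta;z) <= B, written pointwise.\<close>
definition assumption2 :: "'a set \<Rightarrow> 'z set \<Rightarrow> ('a \<Rightarrow> 'z \<Rightarrow> real) \<Rightarrow> real \<Rightarrow> bool" where
  "assumption2 \<Theta> Z f B \<longleftrightarrow> (\<forall>\<theta>\<in>\<Theta>. \<forall>z\<in>Z. \<forall>z'\<in>Z. f \<theta> z - f \<theta> z' \<le> B)"

end

theory Submission
  imports Defs
begin

text \<open>Each \<open>\<phi> \<in> \<Phi>\<^sub>T\<close> looks at no more than \<open>T\<close> coordinates \<open>I\<close> of the sample.
  Conditionally on \<open>z\<^sub>I\<close>, the parameter \<open>\<phi>(z)\<close> is fixed and the
  remaining \<open>n - |I|\<close> losses are i.i.d. with range \<open>B\<close>, so Hoeffding's inequality controls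
  their deviation, while the \<open>|I| \<le> T\<close> losses on \<open>I\<close> contribute at most \<open>BT/n\<close>.
  A union bound over the finite class \<open>\<Phi>\<^sub>T\<close> makes this uniform, and the
  \<open>\<epsilon>\<close>-cover transfers it to \<open>\<Phi>\<^sub>n\<close> because the generalization gap is
  \<open>2L\<close>-Lipschitz in the parameter.\<close>

lemma borel_measurable_uniformly_lipschitz_comp:
  fixes \<phi> :: "'m \<Rightarrow> 'a::{metric_space, second_countable_topology}" and v :: "'a \<Rightarrow> 'w \<Rightarrow> real"
  assumes \<phi>: "\<phi> \<in> borel_measurable M" and \<phi>_into: "\<And>x. x \<in> space M \<Longrightarrow> \<phi> x \<in> \<Theta>"
    and Y: "Y \<in> measurable M N"
    and v: "\<And>\<theta>. \<theta> \<in> \<Theta> \<Longrightarrow> v \<theta> \<in> borel_measurable N"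
    and lipschitz: "\<And>\<theta> \<theta>' w. \<theta> \<in> \<Theta> \<Longrightarrow> \<theta>' \<in> \<Theta> \<Longrightarrow> w \<in> space N \<Longrightarrow>
                     \<bar>v \<theta> w - v \<theta>' w\<bar> \<le> K * dist \<theta> \<theta>'"
  shows "(\<lambda>x. v (\<phi> x) (Y x)) \<in> borel_measurable M"
proof (cases "space M = {}")
  case True
  then show ?thesis unfolding measurable_def by auto
next
  case False
  then have "\<Theta> \<noteq> {}" using \<phi>_into by blast
  obtain D where D: "countable D" "D \<subseteq> \<Theta>" "\<Theta> \<subseteq> closure D" using separable by blast
  with \<open>\<Theta> \<noteq> {}\<close> have "D \<noteq> {}" by auto
  define e where "e = from_nat_into D"
  have e_in: "e i \<in> \<Theta>" for i using from_nat_into[OF \<open>D \<noteq> {}\<close>] D(2) by (auto simp: e_def)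
  have e_dense: "\<exists>i. dist (e i) \<theta> < r" if "\<theta> \<in> \<Theta>" "r > 0" for \<theta> r
  proof -
    have "\<theta> \<in> closure D" using that D(3) by auto
    then obtain d where "d \<in> D" "dist d \<theta> < r" using \<open>r > 0\<close> by (metis closure_approachable)
    moreover have "d \<in> range e"
      using \<open>d \<in> D\<close> D(1) \<open>D \<noteq> {}\<close> by (simp add: e_def range_from_nat_into)
    ultimately show ?thesis by auto
  qed
  \<comment> \<open>Replace \<open>\<phi> x\<close> by the first point of the dense sequence within distance \<open>1/(k+1)\<close>;
      this takes countably many values, and the Lipschitz bound gives pointwise convergence.\<close>
  define g where "g k x = (LEAST i. dist (e i) (\<phi> x) < 1 / Suc k)" for k x
  have g_meas: "g k \<in> measurable M (count_space UNIV)" for k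
    unfolding g_def by (intro measurable_Least borel_measurable_pred_less borel_measurable_dist
        measurable_const \<phi>) auto
  have approx_meas: "(\<lambda>x. v (e (g k x)) (Y x)) \<in> borel_measurable M" for k
  proof (rule measurable_compose_countable[OF _ g_meas])
    fix i show "(\<lambda>x. v (e i) (Y x)) \<in> borel_measurable M"
      using measurable_comp[OF Y v[OF e_in]] by (simp add: comp_def)
  qed
  have "(\<lambda>k. v (e (g k x)) (Y x)) \<longlonglongrightarrow> v (\<phi> x) (Y x)" if x: "x \<in> space M" for x
  proof -
    have Y_x: "Y x \<in> space N" using Y x by (auto simp: measurable_def)
    have bound: "\<forall>k. norm (v (e (g k x)) (Y x) - v (\<phi> x) (Y x)) \<le> \<bar>K\<bar> * (1 / Suc k)"
    proof
      fix k
      have close: "dist (e (g k x)) (\<phi> x) < 1 / Suc k"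
        unfolding g_def using e_dense[OF \<phi>_into[OF x], of "1 / Suc k"] by (auto intro: LeastI_ex)
      have "norm (v (e (g k x)) (Y x) - v (\<phi> x) (Y x)) \<le> K * dist (e (g k x)) (\<phi> x)"
        using lipschitz[OF e_in \<phi>_into[OF x] Y_x] by simp
      also have "\<dots> \<le> \<bar>K\<bar> * dist (e (g k x)) (\<phi> x)" by (simp add: mult_right_mono)
      also have "\<dots> \<le> \<bar>K\<bar> * (1 / Suc k)" using close by (intro mult_left_mono) auto
      finally show "norm (v (e (g k x)) (Y x) - v (\<phi> x) (Y x)) \<le> \<bar>K\<bar> * (1 / Suc k)" .
    qed
    have "(\<lambda>k. \<bar>K\<bar> * (1 / real (Suc k))) \<longlonglongrightarrow> 0"
      using tendsto_mult_right_zero[OF LIMSEQ_inverse_real_of_nat, of "\<bar>K\<bar>"]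
      by (simp add: inverse_eq_divide)
    from Lim_null_comparison[OF always_eventually[OF bound] this]
    show ?thesis by (rule LIM_zero_cancel)
  qed
  then show ?thesis by (rule borel_measurable_LIMSEQ_real[OF _ approx_meas])
qed

lemma indep_vars_PiM_components:
  assumes "prob_space \<mu>" "J \<noteq> {}"
  shows "prob_space.indep_vars (PiM J (\<lambda>_. \<mu>)) (\<lambda>_. \<mu>) (\<lambda>j y. y j) J"
proof -
  interpret P: prob_space "PiM J (\<lambda>_. \<mu>)" by (intro prob_space_PiM assms(1))
  have "distr (PiM J (\<lambda>_. \<mu>)) (PiM J (\<lambda>_. \<mu>)) (\<lambda>x. \<lambda>j\<in>J. x j)
      = distr (PiM J (\<lambda>_. \<mu>)) (PiM J (\<lambda>_. \<mu>)) (\<lambda>x. x)"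
    by (intro distr_cong) (auto simp: space_PiM PiE_def extensional_def restrict_def fun_eq_iff)
  moreover have "PiM J (\<lambda>j. distr (PiM J (\<lambda>_. \<mu>)) \<mu> (\<lambda>y. y j)) = PiM J (\<lambda>_. \<mu>)"
    by (intro PiM_cong refl distr_PiM_component assms(1))
  ultimately show ?thesis
    by (subst P.indep_vars_iff_distr_eq_PiM'[OF assms(2)]) (auto simp: measurable_component_singleton)
qed

lemma Hoeffding_PiM_abs_ge:
  fixes g :: "'z \<Rightarrow> real"
  assumes \<mu>: "prob_space \<mu>" and J: "finite J"
    and g: "g \<in> borel_measurable \<mu>"
    and g_range: "\<And>w w'. w \<in> space \<mu> \<Longrightarrow> w' \<in> space \<mu> \<Longrightarrow> g w - g w' \<le> B"
    and B: "B > 0" and s: "s \<ge> 0"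
  shows "measure (PiM J (\<lambda>_. \<mu>)) {y \<in> space (PiM J (\<lambda>_. \<mu>)). s \<le> \<bar>\<Sum>j\<in>J. g (y j) - (\<integral>w. g w \<partial>\<mu>)\<bar>}
          \<le> 2 * exp (-2 * s\<^sup>2 / (real (card J) * B\<^sup>2))"
proof (cases "J = {}")
  case True
  interpret P: prob_space "PiM J (\<lambda>_. \<mu>)" by (intro prob_space_PiM \<mu>)
  have "P.prob {y \<in> space (PiM J (\<lambda>_. \<mu>)). s \<le> \<bar>\<Sum>j\<in>J. g (y j) - (\<integral>w. g w \<partial>\<mu>)\<bar>} \<le> 1"
    by (rule P.prob_le_1)
  then show ?thesis using True by simp
next
  case False
  interpret \<mu>: prob_space \<mu> by (rule \<mu>)
  interpret P: prob_space "PiM J (\<lambda>_. \<mu>)" by (intro prob_space_PiM \<mu>)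
  obtain w0 where w0: "w0 \<in> space \<mu>" using \<mu>.not_empty by blast
  define a where "a = Inf (g ` space \<mu>)"
  have "bdd_below (g ` space \<mu>)"
    using g_range w0 by (intro bdd_belowI[of _ "g w0 - B"]) force
  then have a_le: "a \<le> g w" if "w \<in> space \<mu>" for w
    unfolding a_def using that by (intro cInf_lower) auto
  have le_a_B: "g w \<le> a + B" if "w \<in> space \<mu>" for w
  proof -
    have "g w - B \<le> a" unfolding a_def
      using w0 g_range[OF that] by (intro cInf_greatest) (auto simp: algebra_simps)
    then show ?thesis by simp
  qed
  have expectation_eq: "P.expectation (\<lambda>y. g (y j)) = (\<integral>w. g w \<partial>\<mu>)" if "j \<in> J" for j
  proof -
    have "(\<integral>w. g w \<partial>\<mu>) = (\<integral>w. g w \<partial>distr (PiM J (\<lambda>_. \<mu>)) \<mu> (\<lambda>y. y j))"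
      by (simp add: distr_PiM_component[OF \<mu> that])
    also have "\<dots> = P.expectation (\<lambda>y. g (y j))"
      using that g by (intro integral_distr) (auto simp: measurable_component_singleton)
    finally show ?thesis by simp
  qed
  interpret H: Hoeffding_ineq "PiM J (\<lambda>_. \<mu>)" J "\<lambda>j y. g (y j)" "\<lambda>_. a" "\<lambda>_. a + B"
      "\<Sum>j\<in>J. P.expectation (\<lambda>y. g (y j))"
  proof unfold_locales
    show "finite J" by (rule J)
    show "P.indep_vars (\<lambda>_. borel) (\<lambda>j y. g (y j)) J"
      using g by (intro P.indep_vars_compose2[OF indep_vars_PiM_components[OF \<mu> False]]) auto
    show "AE x in PiM J (\<lambda>_. \<mu>). g (x j) \<in> {a..a + B}" if "j \<in> J" for j
      using a_le le_a_B that by (intro AE_I2) (auto simp: space_PiM PiE_def Pi_def)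
  qed
  have "(\<Sum>j\<in>J. (a + B - a)\<^sup>2) > 0" using J False B by (simp add: card_gt_0_iff)
  from H.Hoeffding_ineq_abs_ge[OF s this]
  show ?thesis by (simp add: expectation_eq sum_subtractf)
qed

lemma measure_PiM_le_sections:
  fixes M :: "'i \<Rightarrow> 'a measure"
  assumes M: "\<And>i. prob_space (M i)"
    and IJ: "I \<inter> J = {}" "finite I" "finite J"
    and A: "A \<in> sets (PiM (I \<union> J) M)"
    and sections: "\<And>x. x \<in> space (PiM I M) \<Longrightarrow>
        measure (PiM J M) ((\<lambda>y. merge I J (x, y)) -` A \<inter> space (PiM J M)) \<le> c"
  shows "measure (PiM (I \<union> J) M) A \<le> c"
proof -
  interpret product_sigma_finite M
    by (simp add: product_sigma_finite_def M prob_space_imp_sigma_finite)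
  interpret PI: prob_space "PiM I M" by (intro prob_space_PiM M)
  interpret PJ: prob_space "PiM J M" by (intro prob_space_PiM M)
  interpret PIJ: prob_space "PiM (I \<union> J) M" by (intro prob_space_PiM M)
  obtain x0 where "x0 \<in> space (PiM I M)" using PI.not_empty by blast
  then have "0 \<le> c" using sections[of x0] by (meson measure_nonneg order_trans)
  have "emeasure (PiM (I \<union> J) M) A
      = (\<integral>\<^sup>+x. emeasure (PiM J M) ((\<lambda>y. merge I J (x, y)) -` A \<inter> space (PiM J M)) \<partial>PiM I M)"
    by (rule emeasure_fold_integral[OF IJ A])
  also have "\<dots> \<le> (\<integral>\<^sup>+x. ennreal c \<partial>PiM I M)"
    using sections by (intro nn_integral_mono) (simp add: PJ.emeasure_eq_measure ennreal_leI)
  also have "\<dots> = ennreal c" by (simp add: PI.emeasure_space_1)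
  finally show ?thesis using \<open>0 \<le> c\<close> by (simp add: PIJ.emeasure_eq_measure)
qed

locale bounded_lipschitz_loss = prob_space \<mu> for \<mu> :: "'z measure" +
  fixes \<Theta> :: "'a::{real_normed_vector, second_countable_topology} set"
    and f :: "'a \<Rightarrow> 'z \<Rightarrow> real" and L B :: real
  assumes loss_measurable: "\<And>\<theta>. \<theta> \<in> \<Theta> \<Longrightarrow> f \<theta> \<in> borel_measurable \<mu>"
    and loss_lipschitz: "assumption1 \<Theta> (space \<mu>) f L"
    and loss_range: "assumption2 \<Theta> (space \<mu>) f B"
begin

definition gen_gap :: "nat \<Rightarrow> (nat \<Rightarrow> 'z) \<Rightarrow> 'a \<Rightarrow> real" where
  "gen_gap n z \<theta> = emp_risk n f z \<theta> - pop_risk \<mu> f \<theta>"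

lemma integrable_loss: "\<theta> \<in> \<Theta> \<Longrightarrow> integrable \<mu> (f \<theta>)"
proof -
  assume \<theta>: "\<theta> \<in> \<Theta>"
  obtain w0 where w0: "w0 \<in> space \<mu>" using not_empty by blast
  have "\<bar>f \<theta> w\<bar> \<le> \<bar>f \<theta> w0\<bar> + B" if "w \<in> space \<mu>" for w
  proof -
    have "f \<theta> w - f \<theta> w0 \<le> B" "f \<theta> w0 - f \<theta> w \<le> B"
      using loss_range \<theta> w0 that unfolding assumption2_def by auto
    then show ?thesis by linarith
  qed
  then show ?thesis
    by (intro integrable_const_bound[where B="\<bar>f \<theta> w0\<bar> + B"] AE_I2 loss_measurable[OF \<theta>]) auto
qed

lemma abs_loss_minus_pop_risk_le:
  assumes "\<theta> \<in> \<Theta>" "w \<in> space \<mu>"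
  shows "\<bar>f \<theta> w - pop_risk \<mu> f \<theta>\<bar> \<le> B"
proof -
  have range: "f \<theta> w - B \<le> f \<theta> w'" "f \<theta> w' \<le> f \<theta> w + B" if "w' \<in> space \<mu>" for w'
    using loss_range assms that unfolding assumption2_def by fastforce+
  have "pop_risk \<mu> f \<theta> \<le> f \<theta> w + B"
    unfolding pop_risk_def using range by (intro integral_le_const integrable_loss assms AE_I2) auto
  moreover have "f \<theta> w - B \<le> pop_risk \<mu> f \<theta>"
    unfolding pop_risk_def using range by (intro integral_ge_const integrable_loss assms AE_I2) auto
  ultimately show ?thesis by linarith
qed

lemma centered_loss_lipschitz:
  assumes \<theta>: "\<theta> \<in> \<Theta>" "\<theta>' \<in> \<Theta>" and w: "w \<in> space \<mu>"
  shows "\<bar>(f \<theta> w - pop_risk \<mu> f \<theta>) - (f \<theta>' w - pop_risk \<mu> f \<theta>')\<bar> \<le> 2 * L * norm (\<theta> - \<theta>')"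
proof -
  obtain h0 :: "'a \<Rightarrow> real" where h0: "\<And>w. w \<in> space \<mu> \<Longrightarrow>
      \<bar>f \<theta> w - h0 \<theta> - (f \<theta>' w - h0 \<theta>')\<bar> \<le> L * norm (\<theta> - \<theta>')"
    using loss_lipschitz \<theta> unfolding assumption1_def by blast
  define D where "D w = f \<theta> w - h0 \<theta> - (f \<theta>' w - h0 \<theta>')" for w
  define c where "c = L * norm (\<theta> - \<theta>')"
  have D_bound: "- c \<le> D w" "D w \<le> c" if "w \<in> space \<mu>" for w
    using h0[OF that] by (auto simp: D_def c_def)
  have "integrable \<mu> D" unfolding D_def using integrable_loss[OF \<theta>(1)] integrable_loss[OF \<theta>(2)] by auto
  then have "- c \<le> (\<integral>w. D w \<partial>\<mu>)" "(\<integral>w. D w \<partial>\<mu>) \<le> c"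
    using D_bound by (auto intro!: integral_ge_const integral_le_const AE_I2)
  \<comment> \<open>The unknown offset \<open>h0\<close> cancels after centering.\<close>
  moreover have "(\<integral>w. D w \<partial>\<mu>) = pop_risk \<mu> f \<theta> - h0 \<theta> - (pop_risk \<mu> f \<theta>' - h0 \<theta>')"
    unfolding D_def pop_risk_def using integrable_loss[OF \<theta>(1)] integrable_loss[OF \<theta>(2)]
    by (simp add: prob_space)
  ultimately show ?thesis using D_bound[OF w] by (simp add: D_def c_def abs_le_iff)
qed

lemma gen_gap_eq_sum:
  "n > 0 \<Longrightarrow> gen_gap n z \<theta> = (\<Sum>i<n. f \<theta> (z i) - pop_risk \<mu> f \<theta>) / real n"
  by (simp add: gen_gap_def emp_risk_def sum_subtractf field_simps)

lemma gen_gap_lipschitz: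
  assumes n: "n > 0" and z: "z \<in> sample_space n (space \<mu>)" and \<theta>: "\<theta> \<in> \<Theta>" "\<theta>' \<in> \<Theta>"
  shows "\<bar>gen_gap n z \<theta> - gen_gap n z \<theta>'\<bar> \<le> 2 * L * norm (\<theta> - \<theta>')"
proof -
  have "\<bar>gen_gap n z \<theta> - gen_gap n z \<theta>'\<bar>
      = \<bar>\<Sum>i<n. (f \<theta> (z i) - pop_risk \<mu> f \<theta>) - (f \<theta>' (z i) - pop_risk \<mu> f \<theta>')\<bar> / real n"
    using n by (simp add: gen_gap_eq_sum sum_subtractf diff_divide_distrib[symmetric])
  also have "\<dots> \<le> (\<Sum>i<n. \<bar>(f \<theta> (z i) - pop_risk \<mu> f \<theta>) - (f \<theta>' (z i) - pop_risk \<mu> f \<theta>')\<bar>) / real n"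
    by (intro divide_right_mono sum_abs) auto
  also have "\<dots> \<le> (\<Sum>i<n. 2 * L * norm (\<theta> - \<theta>')) / real n"
    using z by (intro divide_right_mono sum_mono centered_loss_lipschitz[OF \<theta>]) auto
  also have "\<dots> = 2 * L * norm (\<theta> - \<theta>')" using n by simp
  finally show ?thesis .
qed

lemma borel_measurable_gen_gap:
  assumes n: "n > 0" and \<phi>: "\<phi> \<in> borel_measurable (PiM {..<n} (\<lambda>_. \<mu>))"
    and \<phi>_into: "\<And>x. x \<in> sample_space n (space \<mu>) \<Longrightarrow> \<phi> x \<in> \<Theta>"
  shows "(\<lambda>z. gen_gap n z (\<phi> z)) \<in> borel_measurable (PiM {..<n} (\<lambda>_. \<mu>))"
proof (rule borel_measurable_uniformly_lipschitz_comp[where Y="\<lambda>z. z" and K="2 * L", OF \<phi>])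
  show "\<phi> x \<in> \<Theta>" if "x \<in> space (PiM {..<n} (\<lambda>_. \<mu>))" for x
    using \<phi>_into that by (simp add: space_PiM)
  show "(\<lambda>z. gen_gap n z \<theta>) \<in> borel_measurable (PiM {..<n} (\<lambda>_. \<mu>))" if "\<theta> \<in> \<Theta>" for \<theta>
  proof -
    have [measurable]: "f \<theta> \<in> borel_measurable \<mu>" by (rule loss_measurable[OF that])
    show ?thesis unfolding gen_gap_def emp_risk_def by measurable
  qed
  show "\<bar>gen_gap n z \<theta> - gen_gap n z \<theta>'\<bar> \<le> 2 * L * dist \<theta> \<theta>'"
    if "\<theta> \<in> \<Theta>" "\<theta>' \<in> \<Theta>" "z \<in> space (PiM {..<n} (\<lambda>_. \<mu>))" for \<theta> \<theta>' z
    using gen_gap_lipschitz[OF n _ that(1,2), of z] that(3) by (simp add: space_PiM dist_norm)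
qed simp

lemma abs_gen_gap_le_sum_outside:
  assumes n: "n > 0" and z: "z \<in> sample_space n (space \<mu>)" and \<theta>: "\<theta> \<in> \<Theta>" and I: "I \<subseteq> {..<n}"
  shows "\<bar>gen_gap n z \<theta>\<bar> \<le> (B * card I + \<bar>\<Sum>j\<in>{..<n} - I. f \<theta> (z j) - pop_risk \<mu> f \<theta>\<bar>) / real n"
proof -
  let ?c = "\<lambda>i. f \<theta> (z i) - pop_risk \<mu> f \<theta>"
  have "\<bar>\<Sum>i\<in>I. ?c i\<bar> \<le> (\<Sum>i\<in>I. \<bar>?c i\<bar>)" by (rule sum_abs)
  also have "\<dots> \<le> B * card I"
    using I z by (intro order.trans[OF sum_bounded_above[of I _ B]] abs_loss_minus_pop_risk_le[OF \<theta>])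
      (auto simp: PiE_def Pi_def mult.commute)
  finally have "\<bar>\<Sum>i\<in>I. ?c i\<bar> \<le> B * card I" .
  moreover have "(\<Sum>i<n. ?c i) = (\<Sum>j\<in>{..<n} - I. ?c j) + (\<Sum>i\<in>I. ?c i)"
    using I by (intro sum.subset_diff) auto
  ultimately show ?thesis
    using n by (simp add: gen_gap_eq_sum divide_right_mono)
qed

lemma gen_gap_tail_depends_on_at_most:
  assumes n: "n > 0" and B: "B > 0" and t: "t \<ge> 0"
    and \<phi>: "\<phi> \<in> borel_measurable (PiM {..<n} (\<lambda>_. \<mu>))"
    and \<phi>_into: "\<And>x. x \<in> sample_space n (space \<mu>) \<Longrightarrow> \<phi> x \<in> \<Theta>"
    and dep: "depends_on_at_most n (space \<mu>) T \<phi>"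
  shows "measure (PiM {..<n} (\<lambda>_. \<mu>))
           {z \<in> space (PiM {..<n} (\<lambda>_. \<mu>)). B * T / n + t < \<bar>gen_gap n z (\<phi> z)\<bar>}
         \<le> 2 * exp (-2 * real n * t\<^sup>2 / B\<^sup>2)"
proof -
  obtain I where I: "I \<subseteq> {..<n}" "card I \<le> T"
    and \<phi>_I: "\<forall>x\<in>sample_space n (space \<mu>). \<forall>x'\<in>sample_space n (space \<mu>).
                 (\<forall>i\<in>I. x i = x' i) \<longrightarrow> \<phi> x = \<phi> x'"
    using dep unfolding depends_on_at_most_def by blast
  define J where "J = {..<n} - I"
  have IJ: "I \<inter> J = {}" "finite I" "finite J" and IJ_eq: "I \<union> J = {..<n}"
    using I(1) finite_subset[OF I(1)] by (auto simp: J_def)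
  let ?bad = "{z \<in> space (PiM {..<n} (\<lambda>_. \<mu>)). B * T / n + t < \<bar>gen_gap n z (\<phi> z)\<bar>}"
  have [measurable]: "(\<lambda>z. gen_gap n z (\<phi> z)) \<in> borel_measurable (PiM {..<n} (\<lambda>_. \<mu>))"
    by (rule borel_measurable_gen_gap[OF n \<phi> \<phi>_into])
  have "?bad \<in> sets (PiM (I \<union> J) (\<lambda>_. \<mu>))"
    unfolding IJ_eq by measurable
  then have "measure (PiM (I \<union> J) (\<lambda>_. \<mu>)) ?bad \<le> 2 * exp (-2 * real n * t\<^sup>2 / B\<^sup>2)"
  proof (rule measure_PiM_le_sections[where M="\<lambda>_. \<mu>", OF prob_space_axioms IJ])
    fix x assume x: "x \<in> space (PiM I (\<lambda>_. \<mu>))"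
    interpret PJ: prob_space "PiM J (\<lambda>_. \<mu>)" by (intro prob_space_PiM prob_space_axioms)
    obtain y0 where y0: "y0 \<in> space (PiM J (\<lambda>_. \<mu>))" using PJ.not_empty by blast
    have merge_in: "merge I J (x, y) \<in> sample_space n (space \<mu>)"
      if "y \<in> space (PiM J (\<lambda>_. \<mu>))" for y
    proof -
      have "merge I J (x, y) \<in> PiE (I \<union> J) (\<lambda>_. space \<mu>)"
        using x that IJ(1) by (simp add: space_PiM PiE_def)
      then show ?thesis unfolding IJ_eq .
    qed
    define \<theta> where "\<theta> = \<phi> (merge I J (x, y0))"
    have \<theta>: "\<theta> \<in> \<Theta>" unfolding \<theta>_def by (rule \<phi>_into[OF merge_in[OF y0]])
    have \<phi>_const: "\<phi> (merge I J (x, y)) = \<theta>" if "y \<in> space (PiM J (\<lambda>_. \<mu>))" for y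
      unfolding \<theta>_def by (rule \<phi>_I[rule_format, OF merge_in[OF that] merge_in[OF y0]]) (simp add: merge_def)
    have [measurable]: "f \<theta> \<in> borel_measurable \<mu>" by (rule loss_measurable[OF \<theta>])
    let ?dev = "\<lambda>y. \<bar>\<Sum>j\<in>J. f \<theta> (y j) - pop_risk \<mu> f \<theta>\<bar>"
    let ?S = "{y \<in> space (PiM J (\<lambda>_. \<mu>)). n * t < ?dev y}"
    have section_sub: "(\<lambda>y. merge I J (x, y)) -` ?bad \<inter> space (PiM J (\<lambda>_. \<mu>)) \<subseteq> ?S"
    proof (intro subsetI)
      fix y assume "y \<in> (\<lambda>y. merge I J (x, y)) -` ?bad \<inter> space (PiM J (\<lambda>_. \<mu>))"
      then have y: "y \<in> space (PiM J (\<lambda>_. \<mu>))"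
        and bad: "B * T / n + t < \<bar>gen_gap n (merge I J (x, y)) \<theta>\<bar>"
        using \<phi>_const by auto
      have "(\<Sum>j\<in>{..<n} - I. f \<theta> (merge I J (x, y) j) - pop_risk \<mu> f \<theta>)
          = (\<Sum>j\<in>J. f \<theta> (y j) - pop_risk \<mu> f \<theta>)"
        using IJ(1) by (intro sum.cong) (auto simp: J_def)
      then have "\<bar>gen_gap n (merge I J (x, y)) \<theta>\<bar> \<le> (B * card I + ?dev y) / n"
        using abs_gen_gap_le_sum_outside[OF n merge_in[OF y] \<theta> I(1)] by simp
      with bad have "(B * T + n * t) / n < (B * card I + ?dev y) / n"
        using n by (simp add: add_divide_distrib)
      then have "B * T + n * t < B * card I + ?dev y"
        using n by (simp add: divide_less_cancel)
      moreover have "B * card I \<le> B * T" using I(2) B by simp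
      ultimately show "y \<in> ?S" using y by simp
    qed
    have "?S \<in> sets (PiM J (\<lambda>_. \<mu>))" by measurable
    then have "PJ.prob ((\<lambda>y. merge I J (x, y)) -` ?bad \<inter> space (PiM J (\<lambda>_. \<mu>))) \<le> PJ.prob ?S"
      using section_sub by (intro PJ.finite_measure_mono)
    also have "PJ.prob ?S \<le> 2 * exp (-2 * real n * t\<^sup>2 / B\<^sup>2)"
    proof (cases "J = {}")
      case True
      then have S_empty: "?S = {}" using t by (auto simp: not_less)
      show ?thesis unfolding S_empty by simp
    next
      case False
      have "PJ.prob ?S \<le> PJ.prob {y \<in> space (PiM J (\<lambda>_. \<mu>)). n * t \<le> ?dev y}"
        by (intro PJ.finite_measure_mono) auto
      also have "\<dots> \<le> 2 * exp (-2 * (n * t)\<^sup>2 / (card J * B\<^sup>2))"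
        unfolding pop_risk_def
      proof (rule Hoeffding_PiM_abs_ge[OF prob_space_axioms IJ(3) loss_measurable[OF \<theta>] _ B])
        show "f \<theta> w - f \<theta> w' \<le> B" if "w \<in> space \<mu>" "w' \<in> space \<mu>" for w w'
          using loss_range \<theta> that unfolding assumption2_def by blast
      qed (use t in simp)
      also have "\<dots> \<le> 2 * exp (-2 * real n * t\<^sup>2 / B\<^sup>2)"
      proof -
        have "card J \<le> n" "0 < card J"
          using card_mono[of "{..<n}" J] IJ(3) False by (auto simp: J_def card_gt_0_iff)
        then have "n * t\<^sup>2 * card J \<le> n * t\<^sup>2 * n" by (intro mult_left_mono) auto
        also have "\<dots> = (n * t)\<^sup>2" by (simp add: power2_eq_square)
        finally have "n * t\<^sup>2 / B\<^sup>2 \<le> (n * t)\<^sup>2 / (card J * B\<^sup>2)"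
          using \<open>0 < card J\<close> B by (simp add: divide_simps)
        then show ?thesis by simp
      qed
      finally show ?thesis .
    qed
    finally show "PJ.prob ((\<lambda>y. merge I J (x, y)) -` ?bad \<inter> space (PiM J (\<lambda>_. \<mu>)))
        \<le> 2 * exp (-2 * real n * t\<^sup>2 / B\<^sup>2)" .
  qed
  then show ?thesis unfolding IJ_eq .
qed

lemma finite_class_gen_gap_bound:
  assumes n: "n > 0" and B: "B > 0" and \<delta>: "\<delta> > 0" and fin: "finite \<Phi>"
    and \<Phi>_meas: "\<And>\<phi>. \<phi> \<in> \<Phi> \<Longrightarrow> \<phi> \<in> borel_measurable (PiM {..<n} (\<lambda>_. \<mu>))"
    and \<Phi>_into: "\<And>\<phi> x. \<phi> \<in> \<Phi> \<Longrightarrow> x \<in> sample_space n (space \<mu>) \<Longrightarrow> \<phi> x \<in> \<Theta>"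
    and \<Phi>_dep: "\<And>\<phi>. \<phi> \<in> \<Phi> \<Longrightarrow> depends_on_at_most n (space \<mu>) T \<phi>"
  shows "\<exists>A \<in> sets (PiM {..<n} (\<lambda>_. \<mu>)). measure (PiM {..<n} (\<lambda>_. \<mu>)) A \<ge> 1 - \<delta> \<and>
           (\<forall>z\<in>A. \<forall>\<phi>\<in>\<Phi>. \<bar>gen_gap n z (\<phi> z)\<bar>
              \<le> B * real T / real n + B * sqrt (ln (2 * real (card \<Phi>) / \<delta>) / (2 * real n)))"
proof (cases "\<delta> < 1 \<and> \<Phi> \<noteq> {}")
  case False
  interpret P: prob_space "PiM {..<n} (\<lambda>_. \<mu>)" by (intro prob_space_PiM prob_space_axioms)
  from False consider "1 \<le> \<delta>" | "\<Phi> = {}" by linarith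
  then show ?thesis
  proof cases
    case 1
    then show ?thesis by (intro bexI[of _ "{}"]) auto
  next
    case 2
    then show ?thesis
      using \<delta> by (intro bexI[of _ "space (PiM {..<n} (\<lambda>_. \<mu>))"]) (auto simp: P.prob_space)
  qed
next
  case True
  let ?M = "PiM {..<n} (\<lambda>_. \<mu>)"
  interpret P: prob_space ?M by (intro prob_space_PiM prob_space_axioms)
  define m where "m = real (card \<Phi>)"
  define t where "t = B * sqrt (ln (2 * m / \<delta>) / (2 * n))"
  define bad where "bad \<phi> = {z \<in> space ?M. B * T / n + t < \<bar>gen_gap n z (\<phi> z)\<bar>}" for \<phi>
  have m: "m \<ge> 1" using True fin by (simp add: m_def Suc_le_eq card_gt_0_iff)
  have ln_pos: "ln (2 * m / \<delta>) > 0" using m True \<delta> by (simp add: field_simps)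
  then have t: "t \<ge> 0" using B by (simp add: t_def)
  \<comment> \<open>The deviation \<open>t\<close> is chosen so that each tail has probability \<open>\<delta> / m\<close>.\<close>
  have "2 * real n * t\<^sup>2 / B\<^sup>2 = ln (2 * m / \<delta>)"
    using ln_pos n B by (simp add: t_def power_mult_distrib)
  then have tail: "2 * exp (-2 * real n * t\<^sup>2 / B\<^sup>2) = \<delta> / m"
    using ln_pos m \<delta> by (simp add: exp_minus field_simps)
  have bad_sets: "bad \<phi> \<in> sets ?M" if "\<phi> \<in> \<Phi>" for \<phi>
  proof -
    have [measurable]: "(\<lambda>z. gen_gap n z (\<phi> z)) \<in> borel_measurable ?M"
      by (rule borel_measurable_gen_gap[OF n \<Phi>_meas[OF that] \<Phi>_into[OF that]])
    show ?thesis unfolding bad_def by measurable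
  qed
  have "P.prob (\<Union>\<phi>\<in>\<Phi>. bad \<phi>) \<le> (\<Sum>\<phi>\<in>\<Phi>. P.prob (bad \<phi>))"
    using bad_sets fin by (intro P.finite_measure_subadditive_finite) auto
  also have "\<dots> \<le> (\<Sum>\<phi>\<in>\<Phi>. \<delta> / m)"
    unfolding bad_def tail[symmetric]
    by (intro sum_mono gen_gap_tail_depends_on_at_most n B t \<Phi>_meas \<Phi>_into \<Phi>_dep)
  also have "\<dots> = \<delta>" using m by (simp add: m_def)
  finally have "P.prob (space ?M - (\<Union>\<phi>\<in>\<Phi>. bad \<phi>)) \<ge> 1 - \<delta>"
    using bad_sets fin by (subst P.prob_compl) auto
  moreover have "space ?M - (\<Union>\<phi>\<in>\<Phi>. bad \<phi>) \<in> sets ?M" using bad_sets fin by auto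
  ultimately show ?thesis by (intro bexI[of _ "space ?M - (\<Union>\<phi>\<in>\<Phi>. bad \<phi>)"]) (auto simp: bad_def t_def m_def)
qed

end

theorem theorem7:
  fixes \<Theta> :: "'a::euclidean_space set"
    and \<mu> :: "'z measure"
    and f :: "'a \<Rightarrow> 'z \<Rightarrow> real"
    and L B \<epsilon> \<delta> :: real
    and n T :: nat
    and \<Phi>n \<Phi>T :: "((nat \<Rightarrow> 'z) \<Rightarrow> 'a) set"
  assumes prob: "prob_space \<mu>"
    and f_meas: "\<And>\<theta>. \<theta> \<in> \<Theta> \<Longrightarrow> f \<theta> \<in> borel_measurable \<mu>"
    and A1: "assumption1 \<Theta> (space \<mu>) f L"
    and A2: "assumption2 \<Theta> (space \<mu>) f B"
    and L_pos: "L > 0" and B_pos: "B > 0"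
    and n_pos: "n \<ge> 1"
    and eps_pos: "\<epsilon> > 0"
    and delta_pos: "\<delta> > 0"
    and T_le: "T \<le> n"
    and \<Phi>n_maps: "\<And>\<psi> x. \<psi> \<in> \<Phi>n \<Longrightarrow> x \<in> sample_space n (space \<mu>) \<Longrightarrow> \<psi> x \<in> \<Theta>"
    and \<Phi>T_fin: "finite \<Phi>T"
    and \<Phi>T_maps: "\<And>\<phi> x. \<phi> \<in> \<Phi>T \<Longrightarrow> x \<in> sample_space n (space \<mu>) \<Longrightarrow> \<phi> x \<in> \<Theta>"
    and \<Phi>T_meas: "\<And>\<phi>. \<phi> \<in> \<Phi>T \<Longrightarrow> \<phi> \<in> borel_measurable (PiM {..<n} (\<lambda>_. \<mu>))"
    and \<Phi>T_dep: "\<And>\<phi>. \<phi> \<in> \<Phi>T \<Longrightarrow> depends_on_at_most n (space \<mu>) T \<phi>"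
    and cover: "\<And>x \<psi>. x \<in> sample_space n (space \<mu>) \<Longrightarrow> \<psi> \<in> \<Phi>n \<Longrightarrow>
                  \<exists>\<phi>\<in>\<Phi>T. norm (\<psi> x - \<phi> x) \<le> \<epsilon>"
  shows "\<exists>A \<in> sets (PiM {..<n} (\<lambda>_. \<mu>)).
           measure (PiM {..<n} (\<lambda>_. \<mu>)) A \<ge> 1 - \<delta> \<and>
           (\<forall>z\<in>A. \<forall>\<psi>\<in>\<Phi>n.
              \<bar>emp_risk n f z (\<psi> z) - pop_risk \<mu> f (\<psi> z)\<bar>
                \<le> B * real T / real n
                  + B * sqrt (ln (2 * real (card \<Phi>T) / \<delta>) / (2 * real n))
                  + 2 * L * \<epsilon>)"
proof -
  interpret loss: bounded_lipschitz_loss \<mu> \<Theta> f L B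
    using prob f_meas A1 A2 by (simp add: bounded_lipschitz_loss_def bounded_lipschitz_loss_axioms_def)
  have n: "n > 0" using n_pos by simp
  obtain A where A: "A \<in> sets (PiM {..<n} (\<lambda>_. \<mu>))" "measure (PiM {..<n} (\<lambda>_. \<mu>)) A \<ge> 1 - \<delta>"
    and A_gap: "\<And>z \<phi>. z \<in> A \<Longrightarrow> \<phi> \<in> \<Phi>T \<Longrightarrow> \<bar>loss.gen_gap n z (\<phi> z)\<bar>
                  \<le> B * real T / real n + B * sqrt (ln (2 * real (card \<Phi>T) / \<delta>) / (2 * real n))"
    using loss.finite_class_gen_gap_bound[OF n B_pos delta_pos \<Phi>T_fin \<Phi>T_meas _ \<Phi>T_dep] \<Phi>T_maps
    by blast
  have "\<bar>loss.gen_gap n z (\<psi> z)\<bar>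
      \<le> B * real T / real n + B * sqrt (ln (2 * real (card \<Phi>T) / \<delta>) / (2 * real n)) + 2 * L * \<epsilon>"
    if z: "z \<in> A" and \<psi>: "\<psi> \<in> \<Phi>n" for z \<psi>
  proof -
    have z_sample: "z \<in> sample_space n (space \<mu>)"
      using sets.sets_into_space[OF A(1)] z by (auto simp: space_PiM)
    obtain \<phi> where \<phi>: "\<phi> \<in> \<Phi>T" "norm (\<psi> z - \<phi> z) \<le> \<epsilon>" using cover[OF z_sample \<psi>] by blast
    have "\<bar>loss.gen_gap n z (\<psi> z) - loss.gen_gap n z (\<phi> z)\<bar> \<le> 2 * L * norm (\<psi> z - \<phi> z)"
      using loss.gen_gap_lipschitz[OF n z_sample \<Phi>n_maps[OF \<psi> z_sample] \<Phi>T_maps[OF \<phi>(1) z_sample]] .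
    also have "\<dots> \<le> 2 * L * \<epsilon>" using \<phi>(2) L_pos by simp
    finally show ?thesis using A_gap[OF z \<phi>(1)] by linarith
  qed
  then show ?thesis using A unfolding loss.gen_gap_def by blast
qed

end
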